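(* Let $L>0$, $D>0$, $s_0\ge0$, $X=[-D/2,D/2]$, and consider the class of problems $\min_{x\in X}g_{t,d,s}(x)$ indexed by $t\ne0$ with $|t|<\frac12L^{1/2}[2(D+s_0)]^{-1/2}$, $d=D/2$ if $t>0$ and $d=-D/2$ if $t<0$, $s=s_0$, where $f_{t,d,s}(x)=t(d-x)$, $\alpha=|t|^{4/3}L^{-2/3}[2(D+s)]^{2/3}$, the stochastic first-order oracle returns $(F_{t,d,s}(x,\xi),F'_{t,d,s}(x,\xi))=\big(-\frac{|t|s}{2(1-\alpha)},0\big)$ with probability $1-\alpha$ and $\frac1\alpha\big(f_{t,d,s}(x)+\frac{|t|s}2,f'_{t,d,s}(x)\big)$ with probability $\alpha$, and $g_{t,d,s}(x)=\mathbb{E}[(F_{t,d,s}(x,\xi)-f_{t,d,s}(x))_+^2]$. Then any method with a deterministic rule for the sample trajectories requires at least $N\ge\Omega(L^2D^2\epsilon^{-2})$ oracle samples to find an $\epsilon$-optimal solution for this class of problems $\min_{x\in X}g_{t,d,s}(x)$.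
   Context: $(a)_+=\max\{a,0\}$. A point $\tilde x$ is $\epsilon$-optimal for $\min_Xg$ if $\mathbb{E}[g(\tilde x)]-\min_Xg\le\epsilon$. A method with a deterministic rule for the sample trajectories sequentially queries the oracle from a given initial point, each query point and the output being deterministic functions of the initial point and the oracle answers received so far; it is required to succeed on every problem of the class. *)

theory Defs
  imports Complex_Main
begin

definition Xset :: "real \<Rightarrow> real set" where
  "Xset D = {-D/2 .. D/2}"

definition alpha :: "real \<Rightarrow> real \<Rightarrow> real \<Rightarrow> real \<Rightarrow> real" where
  "alpha L D s t = \<bar>t\<bar> powr (4/3) * L powr (-2/3) * (2 * (D + s)) powr (2/3)"

definition fobj :: "real \<Rightarrow> real \<Rightarrow> real \<Rightarrow> real" where
  "fobj t d x = t * (d - x)"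

definition fderiv :: "real \<Rightarrow> real \<Rightarrow> real \<Rightarrow> real" where
  "fderiv t d x = - t"

(* Stochastic first-order oracle (SFO). The sample xi is a boolean:
  True (probability alpha) / False (probability 1 - alpha).
  Returns (F(x,xi), F'(x,xi)). *)
definition sfo :: "real \<Rightarrow> real \<Rightarrow> real \<Rightarrow> real \<Rightarrow> real \<Rightarrow> real \<Rightarrow> bool \<Rightarrow> real \<times> real" where
  "sfo L D s t d x xi =
     (let a = alpha L D s t in
      if xi then ((fobj t d x + \<bar>t\<bar> * s / 2) / a, fderiv t d x / a)
      else (- (\<bar>t\<bar> * s) / (2 * (1 - a)), 0))"

definition sprob :: "real \<Rightarrow> bool \<Rightarrow> real" where
  "sprob a xi = (if xi then a else 1 - a)"

definition gobj :: "real \<Rightarrow> real \<Rightarrow> real \<Rightarrow> real \<Rightarrow> real \<Rightarrow> real \<Rightarrow> real" where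
  "gobj L D s t d x =
     (\<Sum>xi\<in>(UNIV::bool set). sprob (alpha L D s t) xi *
        (max (fst (sfo L D s t d x xi) - fobj t d x) 0)^2)"

(* A method with a deterministic rule: the next query point is a deterministic
  function Q of the sfo answers received so far (the initial point being fixed
  inside Q), and the output is a deterministic function Out of all answers. *)
fun traj :: "((real \<times> real) list \<Rightarrow> real) \<Rightarrow> (real \<Rightarrow> bool \<Rightarrow> real \<times> real)
             \<Rightarrow> (real \<times> real) list \<Rightarrow> bool list \<Rightarrow> (real \<times> real) list" where
  "traj Q orc hist [] = hist"
| "traj Q orc hist (xi # xis) = traj Q orc (hist @ [orc (Q hist) xi]) xis"

definition expected_out ::
  "((real \<times> real) list \<Rightarrow> real) \<Rightarrow> ((real \<times> real) list \<Rightarrow> real) \<Rightarrow> nat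
    \<Rightarrow> real \<Rightarrow> real \<Rightarrow> real \<Rightarrow> real \<Rightarrow> real \<Rightarrow> real" where
  "expected_out Q Out N L D s t d =
     (\<Sum>xis\<in>{xis::bool list. length xis = N}.
        (\<Prod>xi\<leftarrow>xis. sprob (alpha L D s t) xi) *
        gobj L D s t d (Out (traj Q (sfo L D s t d) [] xis)))"

definition eps_optimal ::
  "((real \<times> real) list \<Rightarrow> real) \<Rightarrow> ((real \<times> real) list \<Rightarrow> real) \<Rightarrow> nat
    \<Rightarrow> real \<Rightarrow> real \<Rightarrow> real \<Rightarrow> real \<Rightarrow> real \<Rightarrow> real \<Rightarrow> bool" where
  "eps_optimal Q Out N L D s t d \<epsilon> \<longleftrightarrow>
     expected_out Q Out N L D s t d - (INF x\<in>Xset D. gobj L D s t d x) \<le> \<epsilon>"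

definition in_class :: "real \<Rightarrow> real \<Rightarrow> real \<Rightarrow> real \<Rightarrow> bool" where
  "in_class L D s0 t \<longleftrightarrow> t \<noteq> 0 \<and> \<bar>t\<bar> < 1/2 * sqrt L * (2 * (D + s0)) powr (-1/2)"

definition dpar :: "real \<Rightarrow> real \<Rightarrow> real" where
  "dpar D t = (if t > 0 then D/2 else - D/2)"

end

theory Submission
  imports Defs
begin

(* The sign of t cannot be detected from the answer to the sample False: it is
  a constant depending only on |t|. With probability (1 - alpha)^N all N samples
  are False, and then the method outputs the same point x0 for the instances t
  and -t. As f_t(x0) + f_{-t}(x0) = |t| D, for one of them f(x0) >= |t| D / 2,
  which costs an expected suboptimality of at least
  (1 - alpha)^(N+2) t^2 D (D + 2 s) / (4 alpha). Taking alpha = 1 / (8 (N + 1)),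
  so that (1 - alpha)^(N+2) >= 3/4, and t with alpha(t) = alpha, this is at least
  3/32 sqrt(alpha) L D, whence N epsilon^2 >= L^2 D^2 / 2000. *)

lemma sum_prod_sprob_lists_length:
  "(\<Sum>xs\<in>{xs::bool list. length xs = N}. \<Prod>xi\<leftarrow>xs. sprob a xi) = 1"
proof (induction N)
  case 0
  then show ?case by simp
next
  case (Suc n)
  have lists_Suc: "{xs::bool list. length xs = Suc n} = (\<lambda>(xs, b). b # xs) ` ({xs. length xs = n} \<times> UNIV)"
    using lists_length_Suc_eq[of "UNIV::bool set" n] by simp
  have inj: "inj_on (\<lambda>(xs, b::bool). b # xs) ({xs. length xs = n} \<times> UNIV)"
    by (auto simp: inj_on_def)
  have "(\<Sum>xs\<in>{xs::bool list. length xs = Suc n}. \<Prod>xi\<leftarrow>xs. sprob a xi)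
      = (\<Sum>xs\<in>{xs::bool list. length xs = n}. \<Sum>b\<in>UNIV. sprob a b * (\<Prod>xi\<leftarrow>xs. sprob a xi))"
    unfolding lists_Suc sum.reindex[OF inj] sum.cartesian_product by (simp add: case_prod_beta)
  also have "\<dots> = (\<Sum>xs\<in>{xs::bool list. length xs = n}. \<Prod>xi\<leftarrow>xs. sprob a xi)"
    by (simp add: UNIV_bool sprob_def algebra_simps)
  finally show ?case using Suc by simp
qed

lemma prod_sprob_nonneg: "0 \<le> a \<Longrightarrow> a \<le> 1 \<Longrightarrow> 0 \<le> (\<Prod>xi\<leftarrow>xs. sprob a xi)"
  by (induction xs) (auto simp: sprob_def)

lemma weighted_sum_ge_point:
  fixes w v :: "'a \<Rightarrow> real"
  assumes "finite A" "x0 \<in> A" "\<And>x. x \<in> A \<Longrightarrow> 0 \<le> w x" "sum w A = 1"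
    and "\<And>x. x \<in> A \<Longrightarrow> m \<le> v x"
  shows "m + w x0 * (v x0 - m) \<le> (\<Sum>x\<in>A. w x * v x)"
proof -
  have "w x0 * (v x0 - m) \<le> (\<Sum>x\<in>A. w x * (v x - m))"
    by (rule member_le_sum) (use assms in auto)
  also have "\<dots> = (\<Sum>x\<in>A. w x * v x) - m"
    using assms(4) by (simp add: right_diff_distrib sum_subtractf sum_distrib_right[symmetric])
  finally show ?thesis by simp
qed

lemma traj_cong:
  "(\<And>x xi. xi \<in> set xs \<Longrightarrow> orc x xi = orc' x xi) \<Longrightarrow> traj Q orc h xs = traj Q orc' h xs"
  by (induction xs arbitrary: h) auto

lemma alpha_uminus [simp]: "alpha L D s (- t) = alpha L D s t"
  by (simp add: alpha_def)

lemma sfo_False_eq: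
  "\<bar>t\<bar> = \<bar>t'\<bar> \<Longrightarrow> sfo L D s t d x False = sfo L D s t' d' x False"
  by (simp add: sfo_def alpha_def)

lemma fobj_dpar_nonneg: "t \<noteq> 0 \<Longrightarrow> x \<in> Xset D \<Longrightarrow> 0 \<le> fobj t (dpar D t) x"
  by (cases "t > 0") (auto simp: fobj_def dpar_def Xset_def zero_le_mult_iff)

lemma dpar_in_Xset: "D > 0 \<Longrightarrow> dpar D t \<in> Xset D"
  by (auto simp: dpar_def Xset_def)

lemma gobj_eq:
  assumes a: "0 < alpha L D s t" "alpha L D s t < 1" and "0 \<le> fobj t d x" "0 \<le> s"
  shows "gobj L D s t d x
    = ((1 - alpha L D s t) * fobj t d x + \<bar>t\<bar> * s / 2)\<^sup>2 / alpha L D s t"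
proof -
  let ?a = "alpha L D s t" and ?f = "fobj t d x"
  have "0 \<le> \<bar>t\<bar> * s / (2 * (1 - ?a))"
    using assms by simp
  then have no_excess_False: "max (- (\<bar>t\<bar> * s) / (2 * (1 - ?a)) - ?f) 0 = 0"
    using assms(3) by simp
  have "(?f + \<bar>t\<bar> * s / 2) / ?a - ?f = ((1 - ?a) * ?f + \<bar>t\<bar> * s / 2) / ?a"
    using a by (simp add: field_simps)
  moreover have "0 \<le> ((1 - ?a) * ?f + \<bar>t\<bar> * s / 2) / ?a"
    using assms by simp
  ultimately have excess_True:
    "max ((?f + \<bar>t\<bar> * s / 2) / ?a - ?f) 0 = ((1 - ?a) * ?f + \<bar>t\<bar> * s / 2) / ?a"
    by simp
  have "gobj L D s t d x = ?a * (max ((?f + \<bar>t\<bar> * s / 2) / ?a - ?f) 0)\<^sup>2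
      + (1 - ?a) * (max (- (\<bar>t\<bar> * s) / (2 * (1 - ?a)) - ?f) 0)\<^sup>2"
    by (simp add: gobj_def UNIV_bool sprob_def sfo_def Let_def)
  also have "\<dots> = ((1 - ?a) * ?f + \<bar>t\<bar> * s / 2)\<^sup>2 / ?a"
    unfolding no_excess_False excess_True using a by (simp add: power2_eq_square)
  finally show ?thesis .
qed

lemma gobj_dpar_le:
  assumes "t \<noteq> 0" "alpha L D s t = a" "0 < a" "a < 1" "0 \<le> s" "x \<in> Xset D"
  shows "gobj L D s t (dpar D t) (dpar D t) \<le> gobj L D s t (dpar D t) x"
proof -
  have "0 \<le> fobj t (dpar D t) x" using assms fobj_dpar_nonneg by blast
  then have "(\<bar>t\<bar> * s / 2)\<^sup>2 \<le> ((1 - a) * fobj t (dpar D t) x + \<bar>t\<bar> * s / 2)\<^sup>2"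
    using assms by (intro power_mono) auto
  then show ?thesis
    using assms \<open>0 \<le> fobj t (dpar D t) x\<close>
    by (simp add: gobj_eq fobj_def divide_right_mono)
qed

lemma INF_gobj_dpar:
  assumes "t \<noteq> 0" "alpha L D s t = a" "0 < a" "a < 1" "0 \<le> s" "0 < D"
  shows "(INF x\<in>Xset D. gobj L D s t (dpar D t) x) = gobj L D s t (dpar D t) (dpar D t)"
  using assms dpar_in_Xset gobj_dpar_le by (intro cInf_eq_minimum) auto

lemma gobj_excess_ge:
  assumes "t \<noteq> 0" "alpha L D s t = a" "0 < a" "a < 1" "0 \<le> s" "0 < D"
    and "\<bar>t\<bar> * D / 2 \<le> fobj t (dpar D t) x"
  shows "(1 - a)\<^sup>2 * t\<^sup>2 * D * (D + 2 * s) / (4 * a)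
    \<le> gobj L D s t (dpar D t) x - gobj L D s t (dpar D t) (dpar D t)"
proof -
  define f b c where "f = fobj t (dpar D t) x" and "b = \<bar>t\<bar> * D / 2" and "c = \<bar>t\<bar> * s"
  have "0 \<le> b" "b \<le> f" "0 \<le> c" using assms by (auto simp: f_def b_def c_def)
  have "(1 - a) * b * ((1 - a) * (b + c)) \<le> (1 - a) * f * ((1 - a) * f + c)"
  proof (rule mult_mono)
    have "(1 - a) * b \<le> (1 - a) * f" "(1 - a) * c \<le> c"
      using \<open>b \<le> f\<close> \<open>0 \<le> c\<close> assms(3,4) by (auto intro: mult_left_mono mult_left_le_one_le)
    then show "(1 - a) * (b + c) \<le> (1 - a) * f + c"
      by (simp add: distrib_left)
  qed (use \<open>0 \<le> b\<close> \<open>b \<le> f\<close> \<open>0 \<le> c\<close> assms(3,4) in \<open>auto intro: mult_left_mono\<close>)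
  moreover have "gobj L D s t (dpar D t) x - gobj L D s t (dpar D t) (dpar D t)
      = (1 - a) * f * ((1 - a) * f + c) / a"
    using assms \<open>0 \<le> b\<close> \<open>b \<le> f\<close>
    by (simp add: gobj_eq f_def c_def fobj_def field_simps power2_eq_square)
  moreover have "(1 - a)\<^sup>2 * t\<^sup>2 * D * (D + 2 * s) / 4 = (1 - a) * b * ((1 - a) * (b + c))"
    by (simp add: b_def c_def power2_eq_square field_simps)
  ultimately show ?thesis
    using assms(3) by (simp add: divide_right_mono flip: divide_divide_eq_left)
qed

lemma expected_out_ge_all_False:
  fixes Q Out :: "(real \<times> real) list \<Rightarrow> real" and N :: nat
  assumes "t \<noteq> 0" "alpha L D s t = a" "0 < a" "a < 1" "0 \<le> s"
    and Out: "\<And>h. Out h \<in> Xset D"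
  defines "x0 \<equiv> Out (traj Q (sfo L D s t (dpar D t)) [] (replicate N False))"
  shows "gobj L D s t (dpar D t) (dpar D t)
      + (1 - a) ^ N * (gobj L D s t (dpar D t) x0 - gobj L D s t (dpar D t) (dpar D t))
    \<le> expected_out Q Out N L D s t (dpar D t)"
proof -
  let ?g = "gobj L D s t (dpar D t)"
  have "finite {xs::bool list. length xs = N}"
    using finite_lists_length_eq[of "UNIV::bool set" N] by simp
  then have "?g (dpar D t) + (\<Prod>xi\<leftarrow>replicate N False. sprob a xi) * (?g x0 - ?g (dpar D t))
      \<le> expected_out Q Out N L D s t (dpar D t)"
    unfolding expected_out_def x0_def assms(2)
    using assms prod_sprob_nonneg sum_prod_sprob_lists_length gobj_dpar_le
    by (intro weighted_sum_ge_point) auto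
  then show ?thesis
    by (simp add: sprob_def)
qed

lemma eps_optimal_far_imp_ge:
  assumes "t \<noteq> 0" "alpha L D s t = a" "0 < a" "a < 1" "0 \<le> s" "0 < D"
    and Out: "\<And>h. Out h \<in> Xset D"
    and opt: "eps_optimal Q Out N L D s t (dpar D t) \<epsilon>"
    and "\<bar>t\<bar> * D / 2 \<le> fobj t (dpar D t) (Out (traj Q (sfo L D s t (dpar D t)) [] (replicate N False)))"
  shows "(1 - a) ^ (N + 2) * (t\<^sup>2 * D * (D + 2 * s) / (4 * a)) \<le> \<epsilon>"
proof -
  let ?g = "gobj L D s t (dpar D t)"
  let ?x0 = "Out (traj Q (sfo L D s t (dpar D t)) [] (replicate N False))"
  have "(1 - a) ^ (N + 2) * (t\<^sup>2 * D * (D + 2 * s) / (4 * a))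
      = (1 - a) ^ N * ((1 - a)\<^sup>2 * t\<^sup>2 * D * (D + 2 * s) / (4 * a))"
    by (simp add: power_add power2_eq_square)
  also have "\<dots> \<le> (1 - a) ^ N * (?g ?x0 - ?g (dpar D t))"
    using assms gobj_excess_ge by (intro mult_left_mono) auto
  also have "\<dots> \<le> expected_out Q Out N L D s t (dpar D t) - ?g (dpar D t)"
    using expected_out_ge_all_False[where Q = Q and Out = Out and N = N, OF assms(1-5) Out] by simp
  also have "\<dots> = expected_out Q Out N L D s t (dpar D t) - (INF x\<in>Xset D. ?g x)"
    using INF_gobj_dpar[OF assms(1-6)] by simp
  also have "\<dots> \<le> \<epsilon>"
    using opt by (simp add: eps_optimal_def)
  finally show ?thesis .
qed

lemma fobj_dpar_pm_sum: "t \<noteq> 0 \<Longrightarrow> fobj t (dpar D t) x + fobj (- t) (dpar D (- t)) x = \<bar>t\<bar> * D"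
  by (cases "t > 0") (auto simp: fobj_def dpar_def algebra_simps)

lemma eps_optimal_pm_imp_ge:
  assumes "t \<noteq> 0" "alpha L D s t = a" "0 < a" "a < 1" "0 \<le> s" "0 < D"
    and Out: "\<And>h. Out h \<in> Xset D"
    and opt: "eps_optimal Q Out N L D s t (dpar D t) \<epsilon>"
      "eps_optimal Q Out N L D s (- t) (dpar D (- t)) \<epsilon>"
  shows "(1 - a) ^ (N + 2) * (t\<^sup>2 * D * (D + 2 * s) / (4 * a)) \<le> \<epsilon>"
proof -
  define x0 where "x0 = Out (traj Q (sfo L D s t (dpar D t)) [] (replicate N False))"
  have x0_uminus: "x0 = Out (traj Q (sfo L D s (- t) (dpar D (- t))) [] (replicate N False))"
    unfolding x0_def by (rule arg_cong[of _ _ Out], rule traj_cong) (auto intro: sfo_False_eq)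
  have "\<bar>t\<bar> * D / 2 \<le> fobj t (dpar D t) x0 \<or> \<bar>- t\<bar> * D / 2 \<le> fobj (- t) (dpar D (- t)) x0"
    using fobj_dpar_pm_sum[OF assms(1), of D x0] by auto
  then show ?thesis
  proof
    assume "\<bar>t\<bar> * D / 2 \<le> fobj t (dpar D t) x0"
    then show ?thesis
      using eps_optimal_far_imp_ge[OF assms(1-6) Out opt(1)] x0_def by simp
  next
    assume "\<bar>- t\<bar> * D / 2 \<le> fobj (- t) (dpar D (- t)) x0"
    then show ?thesis
      using eps_optimal_far_imp_ge[of "- t", OF _ _ assms(3-6) Out opt(2)] assms(1,2) x0_uminus by simp
  qed
qed

definition alpha_inv :: "real \<Rightarrow> real \<Rightarrow> real \<Rightarrow> real \<Rightarrow> real" where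
  "alpha_inv L D s a = sqrt (a * sqrt a * L / (2 * (D + s)))"

lemma alpha_inv_pos: "0 < a \<Longrightarrow> 0 < L \<Longrightarrow> 0 < D + s \<Longrightarrow> 0 < alpha_inv L D s a"
  by (simp add: alpha_inv_def)

lemma alpha_alpha_inv:
  assumes "0 < a" "0 < L" "0 < D + s"
  shows "alpha L D s (alpha_inv L D s a) = a"
proof -
  define K where "K = 2 * (D + s)"
  have K: "0 < K" using assms by (simp add: K_def)
  have "a * sqrt a = a powr (1 + 1/2)"
    using assms by (subst powr_add) (simp add: powr_half_sqrt)
  then have "a * sqrt a = a powr (3/2)"
    by simp
  then have "\<bar>alpha_inv L D s a\<bar> powr (4/3) = (a powr (3/2) * (L / K)) powr (2/3)"
    unfolding alpha_inv_def K_def[symmetric] using assms K by (simp add: powr_powr flip: powr_half_sqrt)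
  also have "\<dots> = a * L powr (2/3) / K powr (2/3)"
    using assms K by (simp add: powr_mult powr_powr powr_divide)
  finally have T: "\<bar>alpha_inv L D s a\<bar> powr (4/3) = a * L powr (2/3) / K powr (2/3)" .
  have "alpha L D s (alpha_inv L D s a) = a * L powr (2/3) / K powr (2/3) * L powr (-2/3) * K powr (2/3)"
    unfolding alpha_def K_def[symmetric] T ..
  also have "\<dots> = a * (L powr (2/3) * L powr (-2/3))"
    using K by simp
  also have "\<dots> = a"
    using assms by (simp flip: powr_add)
  finally show ?thesis .
qed

lemma in_class_uminus [simp]: "in_class L D s (- t) = in_class L D s t"
  by (simp add: in_class_def)

lemma in_class_alpha_inv:
  assumes "0 < a" "a \<le> 1/8" "0 < L" "0 < D + s"
  shows "in_class L D s (alpha_inv L D s a)"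
proof -
  define K where "K = 2 * (D + s)"
  have K: "0 < K" using assms by (simp add: K_def)
  have "a * sqrt a \<le> a"
    using assms by (simp add: mult_left_le)
  then have "a * sqrt a < 1/4"
    using assms(2) by linarith
  then have "a * sqrt a * (L / K) < 1/4 * (L / K)"
    using assms K by (intro mult_strict_right_mono) auto
  then have "alpha_inv L D s a < sqrt (L / (4 * K))"
    unfolding alpha_inv_def K_def[symmetric] by simp
  also have "sqrt (L / (4 * K)) = 1/2 * sqrt L * K powr (-1/2)"
    using K by (simp add: real_sqrt_divide real_sqrt_mult powr_minus_divide powr_half_sqrt)
  finally show ?thesis
    using alpha_inv_pos[OF assms(1,3,4)] unfolding in_class_def K_def[symmetric] by simp
qed

lemma solves_class_imp_eps_ge:
  assumes "0 < L" "0 < D" "0 \<le> s" "0 < a" "a \<le> 1/8"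
    and Out: "\<And>h. Out h \<in> Xset D"
    and solves: "\<And>t. in_class L D s t \<Longrightarrow> eps_optimal Q Out N L D s t (dpar D t) \<epsilon>"
  shows "(1 - a) ^ (N + 2) * (sqrt a * L * D / 8) \<le> \<epsilon>"
proof -
  define t where "t = alpha_inv L D s a"
  have Ds: "0 < D + s" using assms by simp
  have t: "0 < t" "alpha L D s t = a" "in_class L D s t"
    using alpha_inv_pos alpha_alpha_inv in_class_alpha_inv assms Ds by (auto simp: t_def)
  have "t\<^sup>2 = a * sqrt a * L / (2 * (D + s))"
    using assms Ds by (simp add: t_def alpha_inv_def)
  then have t2: "t\<^sup>2 * (D + s) = a * sqrt a * L / 2"
    using Ds by (simp add: field_simps)
  have "sqrt a * L * D / 8 = t\<^sup>2 * (D + s) * D / (4 * a)"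
    using assms(4) by (simp add: t2)
  also have "\<dots> \<le> t\<^sup>2 * (D + 2 * s) * D / (4 * a)"
    using assms by (intro divide_right_mono mult_right_mono mult_left_mono) auto
  finally have "sqrt a * L * D / 8 \<le> t\<^sup>2 * D * (D + 2 * s) / (4 * a)"
    by (simp add: mult_ac)
  then have "(1 - a) ^ (N + 2) * (sqrt a * L * D / 8)
      \<le> (1 - a) ^ (N + 2) * (t\<^sup>2 * D * (D + 2 * s) / (4 * a))"
    using assms by (intro mult_left_mono) auto
  also have "\<dots> \<le> \<epsilon>"
    using eps_optimal_pm_imp_ge[OF _ t(2) assms(4) _ assms(3,2) Out solves solves] t assms(5) by simp
  finally show ?thesis .
qed

lemma one_minus_pow_ge_three_quarters: "3/4 \<le> (1 - 1 / (8 * (real N + 1))) ^ (N + 2)"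
proof -
  define a where "a = 1 / (8 * (real N + 1))"
  have "1 + real (N + 2) * (- a) \<le> (1 + (- a)) ^ (N + 2)"
    by (rule Bernoulli_inequality) (simp add: a_def field_simps)
  moreover have "real (N + 2) * a \<le> 1/4"
    by (simp add: a_def field_simps)
  ultimately show ?thesis
    unfolding a_def[symmetric] by simp
qed

lemma sample_count_ge:
  fixes N :: nat and y \<epsilon> :: real
  assumes "0 < y" "\<epsilon> \<le> y / 64" and eps: "3/32 * sqrt (1 / (8 * (real N + 1))) * y \<le> \<epsilon>"
  shows "1/2000 * y\<^sup>2 / \<epsilon>\<^sup>2 \<le> real N"
proof -
  have "0 < 3/32 * sqrt (1 / (8 * (real N + 1))) * y"
    using assms(1) by simp
  then have "0 < \<epsilon>"
    using eps by linarith
  have "(3/32 * sqrt (1 / (8 * (real N + 1))) * y)\<^sup>2 \<le> \<epsilon>\<^sup>2"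
    using eps assms(1) by (intro power_mono) auto
  then have lower: "9/8192 * y\<^sup>2 \<le> (real N + 1) * \<epsilon>\<^sup>2"
    by (simp add: field_simps)
  have "\<epsilon>\<^sup>2 \<le> (y / 64)\<^sup>2"
    using assms(2) \<open>0 < \<epsilon>\<close> by (intro power_mono) auto
  then have "\<epsilon>\<^sup>2 \<le> y\<^sup>2 / 4096"
    by (simp add: power_divide)
  then have "(real N + 1) * \<epsilon>\<^sup>2 \<le> (real N + 1) * (y\<^sup>2 / 4096)"
    by (rule mult_left_mono) simp
  then have "9/8192 * y\<^sup>2 \<le> (real N + 1) * (y\<^sup>2 / 4096)"
    using lower by linarith
  then have "1 \<le> real N"
    using assms(1) by (simp add: field_simps)
  moreover have "0 \<le> real N * \<epsilon>\<^sup>2"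
    by simp
  ultimately have "(real N + 1) * \<epsilon>\<^sup>2 \<le> 2 * (real N * \<epsilon>\<^sup>2)"
    by (simp add: mult_right_mono flip: mult.assoc)
  then have "y\<^sup>2 \<le> 2000 * (real N * \<epsilon>\<^sup>2)"
    using lower \<open>0 \<le> real N * \<epsilon>\<^sup>2\<close> by linarith
  then show ?thesis
    using \<open>0 < \<epsilon>\<close> by (simp add: field_simps)
qed

theorem lemma12:
  shows "\<exists>c>0. \<exists>c0>0. \<forall>L D s0 \<epsilon>. L > 0 \<longrightarrow> D > 0 \<longrightarrow> s0 \<ge> 0 \<longrightarrow> \<epsilon> > 0 \<longrightarrow>
      \<epsilon> \<le> c0 * L * D \<longrightarrow>
      (\<forall>(Q :: (real \<times> real) list \<Rightarrow> real) (Out :: (real \<times> real) list \<Rightarrow> real) (N :: nat).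
         (\<forall>h. Out h \<in> Xset D) \<longrightarrow>
         (\<forall>t. in_class L D s0 t \<longrightarrow> eps_optimal Q Out N L D s0 t (dpar D t) \<epsilon>) \<longrightarrow>
         real N \<ge> c * L^2 * D^2 / \<epsilon>^2)"
proof -
  have "1/2000 * L^2 * D^2 / \<epsilon>^2 \<le> real N"
    if "0 < L" "0 < D" "0 \<le> s0" "\<epsilon> \<le> 1/64 * L * D" "\<forall>h. Out h \<in> Xset D"
      and "\<forall>t. in_class L D s0 t \<longrightarrow> eps_optimal Q Out N L D s0 t (dpar D t) \<epsilon>"
    for L D s0 \<epsilon> and Q Out :: "(real \<times> real) list \<Rightarrow> real" and N :: nat
  proof -
    define a where "a = 1 / (8 * (real N + 1))"
    have "(1 - a) ^ (N + 2) * (sqrt a * L * D / 8) \<le> \<epsilon>"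
      using that by (intro solves_class_imp_eps_ge) (auto simp: a_def field_simps)
    moreover have "3/4 * (sqrt a * L * D / 8) \<le> (1 - a) ^ (N + 2) * (sqrt a * L * D / 8)"
      using one_minus_pow_ge_three_quarters[of N] that by (intro mult_right_mono) (auto simp: a_def)
    ultimately have "3/4 * (sqrt a * L * D / 8) \<le> \<epsilon>"
      by linarith
    then have "3/32 * sqrt a * (L * D) \<le> \<epsilon>"
      by (simp add: mult_ac)
    then show ?thesis
      using sample_count_ge[of "L * D" \<epsilon> N] that by (simp add: a_def power_mult_distrib)
  qed
  then show ?thesis
    by (intro exI[of _ "1/2000"] exI[of _ "1/64"] conjI) auto
qed

end
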